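(* Let $f\in C^1(\mathbb{R}^n,\mathbb{R}^n)$ and let $x_0$ be a nondegenerate $T$-periodic limit cycle of $\dot x=f(x)$, $T>0$. Let $A_{n-1}$ be any real $n\times(n-1)$ matrix such that the $n\times n$ matrix $(\dot x_0(0),A_{n-1})$ is nonsingular, and define, for $v\in\mathbb{R}^{n-1}$ near $0$, $S(v)=\Omega(T,0,x_0(0)+A_{n-1}v)$. Then $\dot x_0(0)\notin S'(0)(\mathbb{R}^{n-1})$.
   Context: $\Omega(\cdot,t_0,\xi)$ denotes the solution of the autonomous system $\dot x=f(x)$ satisfying $\Omega(t_0,t_0,\xi)=\xi$. The linearized system along $x_0$ is $\dot y=f'(x_0(t))y$; if $Y(t)$ is its fundamental matrix with $Y(0)=I$, the eigenvalues of $Y(T)$ are its characteristic multipliers ($+1$ is always one of them, since $\dot x_0$ is a $T$-periodic solution). The $T$-periodic limit cycle $x_0$ is called nondegenerate if the characteristic multiplier $+1$ of $\dot y=f'(x_0(t))y$ has algebraic multiplicity $1$ (as a root of the characteristic polynomial of $Y(T)$). *)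

theory Defs
  imports "HOL-Analysis.Analysis" "HOL-Computational_Algebra.Polynomial"
begin

definition is_solution_on :: "('a::real_normed_vector \<Rightarrow> 'a) \<Rightarrow> (real \<Rightarrow> 'a) \<Rightarrow> real set \<Rightarrow> bool" where
  "is_solution_on f x I \<longleftrightarrow> is_interval I \<and>
     (\<forall>s\<in>I. (x has_vector_derivative f (x s)) (at s within I))"

text \<open>The solution operator Omega(t, t0, xi) of the autonomous system x' = f x:
  the value at time t of the solution through xi at time t0
  (uniquely determined when f is C^1).\<close>
definition Omega :: "('a::real_normed_vector \<Rightarrow> 'a) \<Rightarrow> real \<Rightarrow> real \<Rightarrow> 'a \<Rightarrow> 'a" where
  "Omega f t t0 \<xi> = (THE y. \<exists>x I. t0 \<in> I \<and> t \<in> I \<and> is_solution_on f x I \<and> x t0 = \<xi> \<and> x t = y)"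

definition charpoly :: "real^'n^'n \<Rightarrow> real poly" where
  "charpoly M = det (\<chi> i j. (if i = j then [:0, 1:] else 0) - [:M $ i $ j:])"

definition fundamental_matrix :: "(real^'n \<Rightarrow> real^'n^'n) \<Rightarrow> (real \<Rightarrow> real^'n) \<Rightarrow> (real \<Rightarrow> real^'n^'n) \<Rightarrow> bool" where
  "fundamental_matrix J x0 Y \<longleftrightarrow> Y 0 = mat 1 \<and>
     (\<forall>t. (Y has_vector_derivative (J (x0 t) ** Y t)) (at t))"

definition nondegenerate :: "(real^'n \<Rightarrow> real^'n^'n) \<Rightarrow> (real \<Rightarrow> real^'n) \<Rightarrow> real \<Rightarrow> bool" where
  "nondegenerate J x0 T \<longleftrightarrow>
     (\<exists>Y. fundamental_matrix J x0 Y \<and> order 1 (charpoly (Y T)) = 1)"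

text \<open>The n x n matrix (b, A) whose first column (index None) is b and remaining columns are those of A.\<close>
definition col_append :: "real^'m option \<Rightarrow> real^'m^'m option \<Rightarrow> real^'m option^'m option" where
  "col_append b A = (\<chi> i j. case j of None \<Rightarrow> b $ i | Some k \<Rightarrow> A $ i $ k)"

end

theory Submission
  imports Defs
begin

text \<open>The period map \<open>S\<close> is differentiable at \<open>0\<close> with \<open>S'(0) = Y(T) A\<close>, where \<open>Y\<close> is the
  fundamental matrix of the variational equation along \<open>x0\<close>; existence (Picard iteration in a
  weighted sup norm), uniqueness and differentiability in the initial value of the flow all rest on
  Gronwall's inequality. Differentiating \<open>x0' = f(x0)\<close> shows that \<open>x0'\<close> solves the variational
  equation, so by periodicity \<open>Y(T) x0'(0) = x0'(0)\<close>. Since \<open>Y(T)\<close> is injective, \<open>x0'(0) = Y(T) A v\<close>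
  would force \<open>x0'(0) = A v\<close>, contradicting the nonsingularity of \<open>(x0'(0), A)\<close>.\<close>

section \<open>Gronwall's inequality\<close>

lemma nonincreasing_if_derivative_nonpos:
  fixes g :: "real \<Rightarrow> real"
  assumes "a \<le> b"
    and "\<And>x. x \<in> {a..b} \<Longrightarrow> (g has_real_derivative g' x) (at x within {a..b})"
    and "\<And>x. x \<in> {a..b} \<Longrightarrow> g' x \<le> 0"
  shows "g b \<le> g a"
proof -
  have d: "\<And>x. \<lbrakk>a \<le> x; x \<le> b\<rbrakk> \<Longrightarrow> (g has_derivative (\<lambda>h. g' x * h)) (at x within {a..b})"
    using assms(2) by (simp add: has_field_derivative_def)
  obtain x where x: "x \<in> {a..b}" "g b - g a = g' x * (b - a)"
    using mvt_very_simple[OF assms(1) d] by blast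
  have "g' x * (b - a) \<le> 0" using assms(1) assms(3)[OF x(1)] by (simp add: mult_nonpos_nonneg)
  with x show ?thesis by simp
qed

lemma has_real_derivative_sqrt_norm_square_add:
  fixes w :: "real \<Rightarrow> 'a::real_inner"
  assumes k: "k \<noteq> 0" and w: "(w has_vector_derivative w') (at s within S)"
  shows "((\<lambda>s. sqrt ((norm (w s))\<^sup>2 + k\<^sup>2)) has_real_derivative
           inner (w s) w' / sqrt ((norm (w s))\<^sup>2 + k\<^sup>2)) (at s within S)"
proof -
  have pos: "(norm (w s))\<^sup>2 + k\<^sup>2 > 0" using k by (simp add: add_nonneg_pos)
  have "((\<lambda>s. inner (w s) (w s)) has_derivative
         (\<lambda>h. inner (w s) (h *\<^sub>R w') + inner (h *\<^sub>R w') (w s))) (at s within S)"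
    using has_derivative_inner[OF w[unfolded has_vector_derivative_def] w[unfolded has_vector_derivative_def]] .
  moreover have "(\<lambda>h. inner (w s) (h *\<^sub>R w') + inner (h *\<^sub>R w') (w s)) = (*) (2 * inner (w s) w')"
    by (auto simp: inner_commute algebra_simps)
  ultimately have "((\<lambda>s. (norm (w s))\<^sup>2) has_real_derivative 2 * inner (w s) w') (at s within S)"
    by (simp add: has_field_derivative_def power2_norm_eq_inner)
  then have "((\<lambda>s. (norm (w s))\<^sup>2 + k\<^sup>2) has_real_derivative 2 * inner (w s) w') (at s within S)"
    using DERIV_add[OF _ DERIV_const[of "k\<^sup>2"]] by fastforce
  from DERIV_chain2[OF DERIV_real_sqrt[OF pos] this] show ?thesis
    by (simp add: field_simps)
qed

text \<open>The norm of \<open>w\<close> need not be differentiable where \<open>w\<close> vanishes, but the smoothed norm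
  \<open>\<rho> = sqrt (\<bar>w\<bar>\<^sup>2 + k\<^sup>2)\<close> is, and \<open>exp (- L s) * (\<rho> s + c / L)\<close> is nonincreasing.\<close>
lemma gronwall_smoothed:
  fixes w :: "real \<Rightarrow> 'a::real_inner"
  assumes L: "0 < L" and c: "0 \<le> c" and k: "0 < k"
    and w: "\<And>t. t \<in> {0..T} \<Longrightarrow> (w has_vector_derivative w' t) (at t within {0..T})"
    and growth: "\<And>t. t \<in> {0..T} \<Longrightarrow> norm (w' t) \<le> L * norm (w t) + c"
    and t: "t \<in> {0..T}"
  shows "norm (w t) \<le> exp (L * t) * (norm (w 0) + k + c / L)"
proof -
  define \<rho> where "\<rho> s = sqrt ((norm (w s))\<^sup>2 + k\<^sup>2)" for s
  define \<phi> where "\<phi> s = exp (- (L * s)) * (\<rho> s + c / L)" for s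
  have \<rho>_pos: "\<rho> s > 0" for s
    unfolding \<rho>_def using k by (simp add: add_nonneg_pos)
  have norm_le_\<rho>: "norm (w s) \<le> \<rho> s" for s
    unfolding \<rho>_def by (rule real_le_rsqrt) simp
  have sub: "{0..t} \<subseteq> {0..T}" using t by auto
  have d\<phi>: "(\<phi> has_real_derivative exp (- (L * s)) * (inner (w s) (w' s) / \<rho> s - L * \<rho> s - c))
      (at s within {0..t})" if s: "s \<in> {0..t}" for s
  proof -
    have "(\<rho> has_real_derivative inner (w s) (w' s) / \<rho> s) (at s within {0..t})"
      unfolding \<rho>_def using k s sub
      by (intro has_real_derivative_sqrt_norm_square_add has_vector_derivative_within_subset[OF w]) auto
    then have "(\<phi> has_real_derivative exp (- (L * s)) * (- L) * (\<rho> s + c / L)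
        + exp (- (L * s)) * (inner (w s) (w' s) / \<rho> s)) (at s within {0..t})"
      unfolding \<phi>_def by (auto intro!: derivative_eq_intros)
    moreover have "exp (- (L * s)) * (- L) * (\<rho> s + c / L) + exp (- (L * s)) * (inner (w s) (w' s) / \<rho> s)
        = exp (- (L * s)) * (inner (w s) (w' s) / \<rho> s - L * \<rho> s - c)"
      using L by (simp add: field_simps)
    ultimately show ?thesis by simp
  qed
  have d\<phi>_nonpos: "exp (- (L * s)) * (inner (w s) (w' s) / \<rho> s - L * \<rho> s - c) \<le> 0"
    if s: "s \<in> {0..t}" for s
  proof -
    have "inner (w s) (w' s) \<le> \<rho> s * norm (w' s)"
      using norm_cauchy_schwarz[of "w s" "w' s"] norm_le_\<rho>[of s] by (meson mult_right_mono norm_ge_zero order_trans)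
    then have "inner (w s) (w' s) / \<rho> s \<le> norm (w' s)"
      using \<rho>_pos[of s] by (simp add: divide_le_eq mult.commute)
    also have "\<dots> \<le> L * \<rho> s + c"
      using growth[of s] s sub norm_le_\<rho>[of s] L by (smt (verit) mult_left_mono subsetD)
    finally show ?thesis by (simp add: mult_nonneg_nonpos)
  qed
  have "\<phi> t \<le> \<phi> 0"
    using t by (intro nonincreasing_if_derivative_nonpos[OF _ d\<phi> d\<phi>_nonpos]) auto
  also have "\<rho> 0 \<le> norm (w 0) + k"
    unfolding \<rho>_def using k sqrt_add_le_add_sqrt[of "(norm (w 0))\<^sup>2" "k\<^sup>2"] by simp
  then have "\<phi> 0 \<le> norm (w 0) + k + c / L" by (simp add: \<phi>_def)
  finally have "\<rho> t + c / L \<le> exp (L * t) * (norm (w 0) + k + c / L)"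
    by (simp add: \<phi>_def exp_minus field_simps)
  moreover have "0 \<le> c / L" using c L by simp
  ultimately show ?thesis using norm_le_\<rho>[of t] by linarith
qed

lemma gronwall:
  fixes w :: "real \<Rightarrow> 'a::real_inner"
  assumes L: "0 < L" and c: "0 \<le> c"
    and w: "\<And>t. t \<in> {0..T} \<Longrightarrow> (w has_vector_derivative w' t) (at t within {0..T})"
    and growth: "\<And>t. t \<in> {0..T} \<Longrightarrow> norm (w' t) \<le> L * norm (w t) + c"
    and t: "t \<in> {0..T}"
  shows "norm (w t) \<le> exp (L * t) * (norm (w 0) + c / L)"
proof (rule field_le_epsilon)
  fix e :: real assume "0 < e"
  then show "norm (w t) \<le> exp (L * t) * (norm (w 0) + c / L) + e"
    using gronwall_smoothed[OF L c _ w growth t, of "e / exp (L * t)"] by (simp add: algebra_simps)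
qed

lemma gronwall_zero:
  fixes w :: "real \<Rightarrow> 'a::real_inner"
  assumes "0 < L"
    and "\<And>t. t \<in> {0..T} \<Longrightarrow> (w has_vector_derivative w' t) (at t within {0..T})"
    and "\<And>t. t \<in> {0..T} \<Longrightarrow> norm (w' t) \<le> L * norm (w t)"
    and "w 0 = 0" and "t \<in> {0..T}"
  shows "w t = 0"
  using gronwall[of L 0 T w w' t] assms by simp

section \<open>Existence of solutions\<close>

lemma has_integral_exp_weight:
  fixes L d \<tau> :: real
  assumes "0 \<le> \<tau>"
  shows "((\<lambda>s. L * exp (2 * L * s) * d) has_integral (d / 2 * exp (2 * L * \<tau>) - d / 2)) {0..\<tau>}"
proof -
  have "((\<lambda>s. L * exp (2 * L * s) * d) has_integral (d / 2 * exp (2 * L * \<tau>) - d / 2 * exp (2 * L * 0))) {0..\<tau>}"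
  proof (rule fundamental_theorem_of_calculus[OF assms])
    fix x assume "x \<in> {0..\<tau>}"
    have "((\<lambda>s. d / 2 * exp (2 * L * s)) has_real_derivative d / 2 * (exp (2 * L * x) * (2 * L))) (at x within {0..\<tau>})"
      by (auto intro!: derivative_eq_intros)
    then show "((\<lambda>s. d / 2 * exp (2 * L * s)) has_vector_derivative L * exp (2 * L * x) * d) (at x within {0..\<tau>})"
      by (simp add: has_real_derivative_iff_has_vector_derivative[symmetric] algebra_simps)
  qed
  then show ?thesis by simp
qed

text \<open>Bielecki's trick: conjugating the Picard operator by the weight \<open>exp (2 L t)\<close> makes it a
  contraction with constant 1/2 in the sup norm on the whole interval, however long.\<close>
definition bielecki_picard :: "real \<Rightarrow> (real \<Rightarrow> 'a \<Rightarrow> 'a) \<Rightarrow> 'a \<Rightarrow> (real \<Rightarrow> 'a) \<Rightarrow> real \<Rightarrow> 'a::banach"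
  where "bielecki_picard L G \<eta> u t =
    exp (- (2 * L * t)) *\<^sub>R (\<eta> + integral {0..t} (\<lambda>s. G s (exp (2 * L * s) *\<^sub>R u s)))"

context
  fixes G :: "real \<Rightarrow> 'a::banach \<Rightarrow> 'a" and T L :: real
  assumes continuous_G: "\<And>u. continuous_on {0..T} u \<Longrightarrow> continuous_on {0..T} (\<lambda>s. G s (u s))"
    and lipschitz_G: "\<And>t x y. t \<in> {0..T} \<Longrightarrow> norm (G t x - G t y) \<le> L * norm (x - y)"
    and L_pos: "0 < L"
begin

lemma continuous_on_weighted_G:
  "continuous_on {0..T} u \<Longrightarrow> continuous_on {0..T} (\<lambda>s. G s (exp (2 * L * s) *\<^sub>R u s))"
  by (rule continuous_G) (intro continuous_intros)

lemma continuous_on_bielecki_picard: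
  "continuous_on {0..T} u \<Longrightarrow> continuous_on {0..T} (bielecki_picard L G \<eta> u)"
  unfolding bielecki_picard_def
  by (intro continuous_intros indefinite_integral_continuous_1 integrable_continuous_real
      continuous_on_weighted_G)

lemma bielecki_picard_contraction:
  assumes u: "continuous_on {0..T} u" and v: "continuous_on {0..T} v"
    and uv: "\<And>s. s \<in> {0..T} \<Longrightarrow> dist (u s) (v s) \<le> d"
    and \<tau>: "\<tau> \<in> {0..T}"
  shows "dist (bielecki_picard L G \<eta> u \<tau>) (bielecki_picard L G \<eta> v \<tau>) \<le> d / 2"
proof -
  let ?Gu = "\<lambda>s. G s (exp (2 * L * s) *\<^sub>R u s)" and ?Gv = "\<lambda>s. G s (exp (2 * L * s) *\<^sub>R v s)"
  have sub: "{0..\<tau>} \<subseteq> {0..T}" using \<tau> by auto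
  have d: "0 \<le> d" using uv[OF \<tau>] zero_le_dist order_trans by blast
  have int: "?Gu integrable_on {0..\<tau>}" "?Gv integrable_on {0..\<tau>}"
    by (intro integrable_continuous_real continuous_on_subset[OF continuous_on_weighted_G sub] u v)+
  have "norm (integral {0..\<tau>} (\<lambda>s. ?Gu s - ?Gv s)) \<le> integral {0..\<tau>} (\<lambda>s. L * exp (2 * L * s) * d)"
  proof (rule integral_norm_bound_integral)
    show "(\<lambda>s. ?Gu s - ?Gv s) integrable_on {0..\<tau>}" by (intro integrable_diff int)
    show "(\<lambda>s. L * exp (2 * L * s) * d) integrable_on {0..\<tau>}"
      using has_integral_exp_weight[of \<tau> L d] \<tau> by auto
    fix s assume s: "s \<in> {0..\<tau>}"
    have "norm (?Gu s - ?Gv s) \<le> L * norm (exp (2 * L * s) *\<^sub>R u s - exp (2 * L * s) *\<^sub>R v s)"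
      using lipschitz_G s sub by blast
    also have "\<dots> = L * exp (2 * L * s) * dist (u s) (v s)"
      by (simp add: dist_norm scaleR_diff_right[symmetric])
    also have "\<dots> \<le> L * exp (2 * L * s) * d"
      using L_pos uv s sub by (intro mult_left_mono) auto
    finally show "norm (?Gu s - ?Gv s) \<le> L * exp (2 * L * s) * d" .
  qed
  also have "\<dots> = d / 2 * exp (2 * L * \<tau>) - d / 2"
    using has_integral_exp_weight \<tau> by (intro integral_unique) auto
  finally have "exp (- (2 * L * \<tau>)) * norm (integral {0..\<tau>} (\<lambda>s. ?Gu s - ?Gv s))
      \<le> exp (- (2 * L * \<tau>)) * (d / 2 * exp (2 * L * \<tau>) - d / 2)"
    by (simp add: mult_left_mono)
  also have "\<dots> \<le> d / 2" using d by (simp add: exp_minus field_simps)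
  finally show ?thesis
    unfolding bielecki_picard_def dist_norm
    by (simp add: integral_diff[OF int] scaleR_diff_right[symmetric])
qed

lemma bielecki_picard_fixed_point:
  assumes T: "0 \<le> T"
  obtains u where "continuous_on {0..T} u" "\<And>t. t \<in> {0..T} \<Longrightarrow> bielecki_picard L G \<eta> u t = u t"
proof -
  define clamp where "clamp t = min T (max 0 t)" for t :: real
  have clamp_in: "clamp t \<in> {0..T}" for t using T by (auto simp: clamp_def)
  have clamp_cont: "continuous_on UNIV clamp" unfolding clamp_def by (intro continuous_intros)
  have bcontfun: "(\<lambda>t. bielecki_picard L G \<eta> (apply_bcontfun u) (clamp t)) \<in> bcontfun" for u :: "real \<Rightarrow>\<^sub>C 'a"
  proof -
    have c: "continuous_on {0..T} (bielecki_picard L G \<eta> (apply_bcontfun u))"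
      by (rule continuous_on_bielecki_picard) simp
    have "continuous_on UNIV (\<lambda>t. bielecki_picard L G \<eta> (apply_bcontfun u) (clamp t))"
      by (rule continuous_on_compose2[OF c clamp_cont]) (use clamp_in in auto)
    moreover have "bounded (bielecki_picard L G \<eta> (apply_bcontfun u) ` {0..T})"
      by (intro compact_imp_bounded compact_continuous_image c compact_Icc)
    moreover have "range (\<lambda>t. bielecki_picard L G \<eta> (apply_bcontfun u) (clamp t))
        \<subseteq> bielecki_picard L G \<eta> (apply_bcontfun u) ` {0..T}"
      using clamp_in by auto
    ultimately show ?thesis unfolding bcontfun_def by (auto intro: bounded_subset)
  qed
  define P where "P u = Bcontfun (\<lambda>t. bielecki_picard L G \<eta> (apply_bcontfun u) (clamp t))" for u
  have P: "apply_bcontfun (P u) t = bielecki_picard L G \<eta> (apply_bcontfun u) (clamp t)" for u t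
    unfolding P_def using bcontfun[of u] by (simp add: Bcontfun_inverse)
  have "dist (P u) (P v) \<le> 1 / 2 * dist u v" for u v
  proof (rule dist_bound)
    fix t
    have "dist (P u t) (P v t) \<le> dist u v / 2"
      unfolding P by (rule bielecki_picard_contraction) (use clamp_in in \<open>simp_all add: dist_bounded\<close>)
    then show "dist (P u t) (P v t) \<le> 1 / 2 * dist u v" by simp
  qed
  then obtain u where u: "P u = u"
    using banach_fix_type[of "1/2" P] by auto
  show ?thesis
  proof (rule that[of "apply_bcontfun u"])
    show "continuous_on {0..T} (apply_bcontfun u)" by simp
    fix t assume "t \<in> {0..T}"
    then have "clamp t = t" by (auto simp: clamp_def)
    then show "bielecki_picard L G \<eta> (apply_bcontfun u) t = apply_bcontfun u t"
      using P[of u t] u by simp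
  qed
qed

lemma picard_existence:
  assumes T: "0 \<le> T"
  obtains z where "z 0 = \<eta>"
    and "\<And>t. t \<in> {0..T} \<Longrightarrow> (z has_vector_derivative G t (z t)) (at t within {0..T})"
proof -
  obtain u where u: "continuous_on {0..T} u" "\<And>t. t \<in> {0..T} \<Longrightarrow> bielecki_picard L G \<eta> u t = u t"
    using bielecki_picard_fixed_point[OF T] by blast
  define z where "z t = exp (2 * L * t) *\<^sub>R u t" for t
  have integral_eq: "z t = \<eta> + integral {0..t} (\<lambda>s. G s (z s))" if t: "t \<in> {0..T}" for t
  proof -
    have "u t = bielecki_picard L G \<eta> u t" using u(2)[OF t] by simp
    then show ?thesis unfolding z_def bielecki_picard_def by (simp add: exp_minus)
  qed
  have "continuous_on {0..T} z" unfolding z_def by (intro continuous_intros u(1))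
  then have Gz: "continuous_on {0..T} (\<lambda>s. G s (z s))" by (rule continuous_G)
  define z' where "z' t = \<eta> + integral {0..t} (\<lambda>s. G s (z s))" for t
  show ?thesis
  proof (rule that[of z'])
    show "z' 0 = \<eta>" by (simp add: z'_def)
    fix t assume t: "t \<in> {0..T}"
    have "(z' has_vector_derivative G t (z t)) (at t within {0..T})"
      unfolding z'_def
      using has_vector_derivative_add[OF has_vector_derivative_const integral_has_vector_derivative[OF Gz t]]
      by simp
    then show "(z' has_vector_derivative G t (z' t)) (at t within {0..T})"
      using integral_eq[OF t] by (simp add: z'_def)
  qed
qed

end

section \<open>Flows of a \<open>C\<^sup>1\<close> vector field\<close>

lemma onorm_matrix_vector_mult_le:
  fixes A :: "real^'n^'m"
  shows "onorm ((*v) A) \<le> real CARD('m) * real CARD('n) * norm A"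
proof (rule onorm_le_matrix_component)
  fix i j
  have "\<bar>A $ i $ j\<bar> \<le> norm (A $ i)" by (rule component_le_norm_cart)
  also have "\<dots> \<le> norm A" by (rule Finite_Cartesian_Product.norm_nth_le)
  finally show "\<bar>A $ i $ j\<bar> \<le> norm A" .
qed

lemma fundamental_matrix_apply_has_vector_derivative:
  fixes Y :: "real \<Rightarrow> real^'n^'n"
  assumes "fundamental_matrix J x0 Y"
  shows "((\<lambda>t. Y t *v v) has_vector_derivative J (x0 t) *v (Y t *v v)) (at t)"
proof -
  have "linear (\<lambda>A::real^'n^'n. A *v v)"
    by (rule linearI) (simp_all add: matrix_vector_mult_add_rdistrib scaleR_matrix_vector_assoc)
  then have "bounded_linear (\<lambda>A::real^'n^'n. A *v v)" by (simp add: linear_conv_bounded_linear)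
  from bounded_linear.has_vector_derivative[OF this] assms show ?thesis
    by (simp add: fundamental_matrix_def matrix_vector_mul_assoc)
qed

locale C1_field =
  fixes f :: "real^'n \<Rightarrow> real^'n" and J :: "real^'n \<Rightarrow> real^'n^'n"
  assumes has_derivative_f: "\<And>x. (f has_derivative (\<lambda>h. J x *v h)) (at x)"
    and continuous_J: "continuous_on UNIV J"
begin

lemma continuous_on_f: "continuous_on S f"
  by (rule continuous_at_imp_continuous_on) (use has_derivative_f has_derivative_continuous in blast)

lemma onorm_J_bounded_on_compact:
  assumes "compact C"
  obtains B where "B > 0" "\<And>y. y \<in> C \<Longrightarrow> onorm ((*v) (J y)) \<le> B"
proof -
  have "bounded (J ` C)"
    by (intro compact_imp_bounded compact_continuous_image continuous_on_subset[OF continuous_J] assms)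
       simp
  then obtain R where R: "\<And>y. y \<in> C \<Longrightarrow> norm (J y) \<le> R" by (auto simp: bounded_iff)
  let ?B = "max 1 (real CARD('n) * real CARD('n) * R)"
  show ?thesis
  proof (rule that[of ?B])
    fix y assume "y \<in> C"
    then have "real CARD('n) * real CARD('n) * norm (J y) \<le> real CARD('n) * real CARD('n) * R"
      using R by (intro mult_left_mono) auto
    with onorm_matrix_vector_mult_le[of "J y"] show "onorm ((*v) (J y)) \<le> ?B" by linarith
  qed simp
qed

lemma lipschitz_on_convex:
  assumes "convex C" and "\<And>y. y \<in> C \<Longrightarrow> onorm ((*v) (J y)) \<le> B" and "a \<in> C" "b \<in> C"
  shows "norm (f a - f b) \<le> B * norm (a - b)"
  by (rule differentiable_bound[OF assms(1) has_derivative_at_withinI[OF has_derivative_f] assms(2-4)])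

lemma norm_linearisation_error_le:
  assumes "convex C" and "p \<in> C" "q \<in> C"
    and "\<And>y. y \<in> C \<Longrightarrow> onorm ((*v) (J y - J p)) \<le> e"
  shows "norm (f q - f p - J p *v (q - p)) \<le> e * norm (q - p)"
proof -
  let ?g = "\<lambda>y. f y - J p *v y"
  have "norm (?g q - ?g p) \<le> e * norm (q - p)"
  proof (rule differentiable_bound[OF assms(1), where f' = "\<lambda>y k. J y *v k - J p *v k"])
    show "(?g has_derivative (\<lambda>k. J y *v k - J p *v k)) (at y within C)" for y
      by (intro has_derivative_diff has_derivative_at_withinI[OF has_derivative_f]
          bounded_linear.has_derivative[OF matrix_vector_mul_bounded_linear] has_derivative_ident)
    show "onorm (\<lambda>k. J y *v k - J p *v k) \<le> e" if "y \<in> C" for y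
      using assms(4)[OF that] by (simp add: matrix_vector_mult_diff_rdistrib[symmetric])
  qed (use assms(2,3) in auto)
  then show ?thesis by (simp add: algebra_simps matrix_vector_right_distrib)
qed

lemma lipschitz_on_bounded:
  assumes "bounded S"
  obtains B where "B > 0" "\<And>a b. a \<in> S \<Longrightarrow> b \<in> S \<Longrightarrow> norm (f a - f b) \<le> B * norm (a - b)"
proof -
  obtain R where "\<forall>x\<in>S. norm x \<le> R" using assms by (auto simp: bounded_iff)
  then have R: "S \<subseteq> cball 0 R" by auto
  obtain B where B: "B > 0" "\<And>y. y \<in> cball 0 R \<Longrightarrow> onorm ((*v) (J y)) \<le> B"
    using onorm_J_bounded_on_compact[of "cball 0 R"] by auto
  show ?thesis
  proof (rule that[OF B(1)])
    fix a b assume "a \<in> S" "b \<in> S"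
    with R have "a \<in> cball 0 R" "b \<in> cball 0 R" by auto
    then show "norm (f a - f b) \<le> B * norm (a - b)"
      using lipschitz_on_convex[OF convex_cball[of 0 R] B(2)] by blast
  qed
qed

lemma solution_unique:
  assumes x: "\<And>s. s \<in> {0..\<tau>} \<Longrightarrow> (x has_vector_derivative f (x s)) (at s within {0..\<tau>})"
    and y: "\<And>s. s \<in> {0..\<tau>} \<Longrightarrow> (y has_vector_derivative f (y s)) (at s within {0..\<tau>})"
    and "x 0 = y 0" and "t \<in> {0..\<tau>}"
  shows "x t = y t"
proof -
  let ?K = "x ` {0..\<tau>} \<union> y ` {0..\<tau>}"
  have "compact ?K"
    using continuous_on_vector_derivative[OF x] continuous_on_vector_derivative[OF y]
    by (intro compact_Un compact_continuous_image compact_Icc)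
  then obtain B where B: "B > 0" and lip: "\<And>a b. a \<in> ?K \<Longrightarrow> b \<in> ?K \<Longrightarrow> norm (f a - f b) \<le> B * norm (a - b)"
    using lipschitz_on_bounded[OF compact_imp_bounded] by blast
  have "(\<lambda>s. x s - y s) t = 0"
  proof (rule gronwall_zero[OF B])
    fix s assume s: "s \<in> {0..\<tau>}"
    show "((\<lambda>s. x s - y s) has_vector_derivative f (x s) - f (y s)) (at s within {0..\<tau>})"
      by (intro has_vector_derivative_diff x y s)
    show "norm (f (x s) - f (y s)) \<le> B * norm (x s - y s)"
      by (rule lip) (use s in auto)
  qed (use assms(3,4) in simp_all)
  then show ?thesis by simp
qed

lemma Omega_eq_solution:
  assumes "0 \<le> \<tau>"
    and x: "\<And>s. s \<in> {0..\<tau>} \<Longrightarrow> (x has_vector_derivative f (x s)) (at s within {0..\<tau>})"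
  shows "Omega f \<tau> 0 (x 0) = x \<tau>"
  unfolding Omega_def
proof (rule the_equality)
  show "\<exists>y I. 0 \<in> I \<and> \<tau> \<in> I \<and> is_solution_on f y I \<and> y 0 = x 0 \<and> y \<tau> = x \<tau>"
    using assms by (intro exI[of _ x] exI[of _ "{0..\<tau>}"]) (auto simp: is_solution_on_def is_interval_cc)
next
  fix v assume "\<exists>y I. 0 \<in> I \<and> \<tau> \<in> I \<and> is_solution_on f y I \<and> y 0 = x 0 \<and> y \<tau> = v"
  then obtain y I where I: "0 \<in> I" "\<tau> \<in> I" and y: "is_solution_on f y I"
    and y0: "y 0 = x 0" and v: "y \<tau> = v" by blast
  have sub: "{0..\<tau>} \<subseteq> I"
  proof
    fix s assume "s \<in> {0..\<tau>}"
    then show "s \<in> I"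
      using y I unfolding is_solution_on_def by (intro mem_is_interval_1_I[where a = 0 and b = s and c = \<tau>]) auto
  qed
  have "(y has_vector_derivative f (y s)) (at s within {0..\<tau>})" if "s \<in> {0..\<tau>}" for s
    using y that sub has_vector_derivative_within_subset[OF _ sub] unfolding is_solution_on_def by blast
  then have "y \<tau> = x \<tau>"
    by (rule solution_unique[OF _ x]) (use y0 assms(1) in auto)
  with v show "v = x \<tau>" by simp
qed

end

section \<open>Linearisation along a solution\<close>

locale C1_field_solution = C1_field f J for f :: "real^'n \<Rightarrow> real^'n" and J +
  fixes x0 :: "real \<Rightarrow> real^'n" and T :: real
  assumes T_pos: "T > 0"
    and x0_solution: "\<And>t. (x0 has_vector_derivative f (x0 t)) (at t)"
begin

lemma continuous_on_x0: "continuous_on S x0"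
  by (rule continuous_at_imp_continuous_on) (use x0_solution has_vector_derivative_continuous in blast)

definition tube :: "(real^'n) set"
  where "tube = (\<lambda>(t, h). x0 t + h) ` ({0..T} \<times> cball 0 1)"

lemma compact_tube: "compact tube"
  unfolding tube_def case_prod_unfold
  by (intro compact_continuous_image compact_Times compact_Icc compact_cball continuous_intros
      continuous_on_compose2[OF continuous_on_x0]) auto

lemma in_tube: "t \<in> {0..T} \<Longrightarrow> norm h \<le> 1 \<Longrightarrow> x0 t + h \<in> tube"
  unfolding tube_def by (rule image_eqI[of _ _ "(t, h)"]) auto

definition M :: real
  where "M = (SOME B. B > 0 \<and> (\<forall>y\<in>tube. onorm ((*v) (J y)) \<le> B))"

lemma M_pos: "M > 0" and onorm_J_le_M: "y \<in> tube \<Longrightarrow> onorm ((*v) (J y)) \<le> M"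
proof -
  obtain B where "B > 0" "\<And>y. y \<in> tube \<Longrightarrow> onorm ((*v) (J y)) \<le> B"
    using onorm_J_bounded_on_compact[OF compact_tube] by blast
  then have "\<exists>B. B > 0 \<and> (\<forall>y\<in>tube. onorm ((*v) (J y)) \<le> B)" by blast
  from someI_ex[OF this] show "M > 0" "y \<in> tube \<Longrightarrow> onorm ((*v) (J y)) \<le> M"
    unfolding M_def by auto
qed

lemma norm_J_x0_le:
  assumes "t \<in> {0..T}"
  shows "norm (J (x0 t) *v v) \<le> M * norm v"
proof -
  have "norm (J (x0 t) *v v) \<le> onorm ((*v) (J (x0 t))) * norm v" by (rule onorm) simp
  also have "\<dots> \<le> M * norm v"
    using onorm_J_le_M[OF in_tube[OF assms, of 0]] by (intro mult_right_mono) auto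
  finally show ?thesis .
qed

lemma lipschitz_near_x0:
  assumes "t \<in> {0..T}" and "norm a \<le> 1" and "norm b \<le> 1"
  shows "norm (f (x0 t + a) - f (x0 t + b)) \<le> M * norm (a - b)"
proof -
  have "norm (f (x0 t + a) - f (x0 t + b)) \<le> M * norm ((x0 t + a) - (x0 t + b))"
  proof (rule lipschitz_on_convex[where C = "cball (x0 t) 1"])
    fix y assume "y \<in> cball (x0 t) 1"
    then have "x0 t + (y - x0 t) \<in> tube"
      using assms(1) by (intro in_tube) (auto simp: dist_norm norm_minus_commute)
    then show "onorm ((*v) (J y)) \<le> M" by (simp add: onorm_J_le_M)
  qed (use assms in \<open>auto simp: dist_norm\<close>)
  then show ?thesis by simp
qed

lemma uniform_linearisation:
  assumes e: "e > 0"
  obtains \<delta> where "\<delta> > 0" "\<delta> \<le> 1"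
    "\<And>t h. t \<in> {0..T} \<Longrightarrow> norm h \<le> \<delta> \<Longrightarrow> norm (f (x0 t + h) - f (x0 t) - J (x0 t) *v h) \<le> e * norm h"
proof -
  define N where "N = real CARD('n) * real CARD('n)"
  have N: "N > 0" by (simp add: N_def)
  have "uniformly_continuous_on tube J"
    by (rule compact_uniformly_continuous[OF continuous_on_subset[OF continuous_J] compact_tube]) simp
  moreover have "e / N > 0" using e N by simp
  ultimately obtain d where d: "d > 0"
    and dJ: "\<forall>y\<in>tube. \<forall>y'\<in>tube. dist y' y < d \<longrightarrow> dist (J y') (J y) < e / N"
    unfolding uniformly_continuous_on_def by blast
  define \<delta> where "\<delta> = min 1 (d / 2)"
  have \<delta>: "\<delta> > 0" "\<delta> \<le> 1" "\<delta> < d" using d by (auto simp: \<delta>_def)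
  have "norm (f (x0 t + h) - f (x0 t) - J (x0 t) *v h) \<le> e * norm h"
    if t: "t \<in> {0..T}" and h: "norm h \<le> \<delta>" for t h
  proof -
    have "onorm ((*v) (J y - J (x0 t))) \<le> e" if y: "y \<in> cball (x0 t) \<delta>" for y
    proof -
      have "y \<in> tube"
        using in_tube[OF t, of "y - x0 t"] y \<delta> by (simp add: dist_norm norm_minus_commute)
      moreover have "x0 t \<in> tube" using in_tube[OF t, of 0] by simp
      moreover have "dist y (x0 t) < d" using y \<delta> by (simp add: dist_commute)
      ultimately have "dist (J y) (J (x0 t)) < e / N" using dJ by blast
      then have "N * norm (J y - J (x0 t)) \<le> e" using N by (simp add: dist_norm field_simps)
      with onorm_matrix_vector_mult_le[of "J y - J (x0 t)"] show ?thesis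
        unfolding N_def by linarith
    qed
    then show ?thesis
      using norm_linearisation_error_le[where C = "cball (x0 t) \<delta>" and p = "x0 t" and q = "x0 t + h"] h \<delta>
      by (simp add: dist_norm)
  qed
  with \<delta> that show ?thesis by blast
qed

text \<open>Perturbations are clipped to the unit ball so that the perturbed field becomes globally
  Lipschitz and Picard's theorem applies on all of \<open>[0, T]\<close>; Gronwall then shows that for small
  initial perturbations the clipping is never active.\<close>
definition clip :: "real^'n \<Rightarrow> real^'n" where "clip = closest_point (cball 0 1)"

lemma norm_clip_le: "norm (clip v) \<le> 1"
  using closest_point_in_set[of "cball (0::real^'n) 1" v] unfolding clip_def by simp

lemma clip_lipschitz: "norm (clip a - clip b) \<le> norm (a - b)"
  using closest_point_lipschitz[of "cball (0::real^'n) 1" a b] unfolding clip_def by (simp add: dist_norm)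

lemma clip_id: "norm v \<le> 1 \<Longrightarrow> clip v = v"
  unfolding clip_def by (rule closest_point_self) simp

lemma continuous_on_clip: "continuous_on S clip"
  unfolding clip_def by (rule continuous_on_closest_point) auto

lemma exists_perturbation:
  assumes small: "exp (M * T) * norm \<eta> < 1"
  obtains z where "z 0 = \<eta>"
    and "\<And>s. s \<in> {0..T} \<Longrightarrow> (z has_vector_derivative f (x0 s + z s) - f (x0 s)) (at s within {0..T})"
    and "\<And>s. s \<in> {0..T} \<Longrightarrow> norm (z s) \<le> exp (M * T) * norm \<eta>"
proof -
  define G where "G s v = f (x0 s + clip v) - f (x0 s)" for s v
  have G_lipschitz: "norm (G t a - G t b) \<le> M * norm (a - b)" if t: "t \<in> {0..T}" for t a b
  proof -
    have "norm (G t a - G t b) \<le> M * norm (clip a - clip b)"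
      unfolding G_def using lipschitz_near_x0[OF t norm_clip_le norm_clip_le] by simp
    also have "\<dots> \<le> M * norm (a - b)" using M_pos clip_lipschitz by (intro mult_left_mono) auto
    finally show ?thesis .
  qed
  have G_continuous: "continuous_on {0..T} (\<lambda>s. G s (u s))" if u: "continuous_on {0..T} u" for u
    unfolding G_def
    by (intro continuous_on_diff continuous_on_compose2[OF continuous_on_f] continuous_on_add
        continuous_on_x0 continuous_on_compose2[OF continuous_on_clip u]) auto
  obtain z where z0: "z 0 = \<eta>"
    and z: "\<And>s. s \<in> {0..T} \<Longrightarrow> (z has_vector_derivative G s (z s)) (at s within {0..T})"
    by (rule picard_existence[OF G_continuous G_lipschitz M_pos]) (use T_pos in auto)
  have bound: "norm (z s) \<le> exp (M * T) * norm \<eta>" if s: "s \<in> {0..T}" for s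
  proof -
    have "norm (z s) \<le> exp (M * s) * (norm (z 0) + 0 / M)"
    proof (rule gronwall[OF M_pos order_refl z _ s])
      fix t assume t: "t \<in> {0..T}"
      show "norm (G t (z t)) \<le> M * norm (z t) + 0"
        using G_lipschitz[OF t, of "z t" 0] by (simp add: G_def clip_id)
    qed
    also have "\<dots> \<le> exp (M * T) * norm \<eta>"
      using s M_pos z0 by (simp add: mult_right_mono)
    finally show ?thesis .
  qed
  show ?thesis
  proof (rule that[of z, OF z0 _ bound])
    fix s assume s: "s \<in> {0..T}"
    have "clip (z s) = z s" using bound[OF s] small by (intro clip_id) auto
    then show "(z has_vector_derivative f (x0 s + z s) - f (x0 s)) (at s within {0..T})"
      using z[OF s] by (simp add: G_def)
  qed
qed

lemma Omega_perturbation: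
  assumes z0: "z 0 = \<eta>"
    and z: "\<And>s. s \<in> {0..T} \<Longrightarrow> (z has_vector_derivative f (x0 s + z s) - f (x0 s)) (at s within {0..T})"
  shows "Omega f T 0 (x0 0 + \<eta>) = x0 T + z T"
proof -
  have "((\<lambda>s. x0 s + z s) has_vector_derivative f (x0 s + z s)) (at s within {0..T})"
    if s: "s \<in> {0..T}" for s
    using has_vector_derivative_add[OF has_vector_derivative_at_within[OF x0_solution] z[OF s]]
    by simp
  from Omega_eq_solution[OF _ this] T_pos z0 show ?thesis by simp
qed

lemma Omega_x0: "Omega f T 0 (x0 0) = x0 T"
  by (rule Omega_eq_solution) (use T_pos in \<open>auto intro: has_vector_derivative_at_within[OF x0_solution]\<close>)

text \<open>\<open>z - Y \<eta>\<close> solves the variational equation up to the linearisation error \<open>r\<close>.\<close>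
lemma perturbation_linearisation_error:
  assumes Y: "fundamental_matrix J x0 Y"
    and z0: "z 0 = \<eta>"
    and z: "\<And>s. s \<in> {0..T} \<Longrightarrow> (z has_vector_derivative f (x0 s + z s) - f (x0 s)) (at s within {0..T})"
    and r: "\<And>s. s \<in> {0..T} \<Longrightarrow> norm (f (x0 s + z s) - f (x0 s) - J (x0 s) *v z s) \<le> r"
  shows "norm (z T - Y T *v \<eta>) \<le> exp (M * T) * (r / M)"
proof -
  define w where "w s = z s - Y s *v \<eta>" for s
  have w: "(w has_vector_derivative (f (x0 s + z s) - f (x0 s)) - J (x0 s) *v (Y s *v \<eta>)) (at s within {0..T})"
    if s: "s \<in> {0..T}" for s
    unfolding w_def
    by (rule has_vector_derivative_diff[OF z[OF s] has_vector_derivative_at_within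
          [OF fundamental_matrix_apply_has_vector_derivative[OF Y]]])
  have growth: "norm ((f (x0 s + z s) - f (x0 s)) - J (x0 s) *v (Y s *v \<eta>)) \<le> M * norm (w s) + r"
    if s: "s \<in> {0..T}" for s
  proof -
    have "norm ((f (x0 s + z s) - f (x0 s)) - J (x0 s) *v (Y s *v \<eta>))
        = norm ((f (x0 s + z s) - f (x0 s) - J (x0 s) *v z s) + J (x0 s) *v w s)"
      unfolding w_def by (simp add: matrix_vector_mult_diff_distrib algebra_simps)
    also have "\<dots> \<le> norm (f (x0 s + z s) - f (x0 s) - J (x0 s) *v z s) + norm (J (x0 s) *v w s)"
      by (rule norm_triangle_ineq)
    also have "\<dots> \<le> r + M * norm (w s)"
      using r[OF s] norm_J_x0_le[OF s] by (rule add_mono)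
    finally show ?thesis by simp
  qed
  have "0 \<le> r" using order_trans[OF norm_ge_zero r[of 0]] T_pos by simp
  have "w 0 = 0" using z0 Y by (simp add: w_def fundamental_matrix_def)
  then show ?thesis
    using gronwall[OF M_pos \<open>0 \<le> r\<close> w growth, of T] T_pos by (simp add: w_def)
qed

lemma Omega_linearisation_estimate:
  assumes Y: "fundamental_matrix J x0 Y" and e: "e > 0"
  obtains d where "d > 0"
    "\<And>\<eta>. norm \<eta> < d \<Longrightarrow> norm (Omega f T 0 (x0 0 + \<eta>) - x0 T - Y T *v \<eta>) \<le> e * norm \<eta>"
proof -
  define E where "E = exp (M * T)"
  have E: "E \<ge> 1" unfolding E_def using M_pos T_pos by simp
  define e' where "e' = e * M / E\<^sup>2"
  have e': "e' > 0" unfolding e'_def using e M_pos E by simp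
  obtain \<delta> where \<delta>: "\<delta> > 0" "\<delta> \<le> 1"
    and rem: "\<And>t h. t \<in> {0..T} \<Longrightarrow> norm h \<le> \<delta> \<Longrightarrow> norm (f (x0 t + h) - f (x0 t) - J (x0 t) *v h) \<le> e' * norm h"
    using uniform_linearisation[OF e'] by blast
  show ?thesis
  proof (rule that[of "\<delta> / E"])
    show "\<delta> / E > 0" using \<delta> E by simp
    fix \<eta> :: "real^'n" assume "norm \<eta> < \<delta> / E"
    then have E\<eta>: "E * norm \<eta> < \<delta>" using E by (simp add: field_simps)
    obtain z where z0: "z 0 = \<eta>"
      and z: "\<And>s. s \<in> {0..T} \<Longrightarrow> (z has_vector_derivative f (x0 s + z s) - f (x0 s)) (at s within {0..T})"
      and z_bound: "\<And>s. s \<in> {0..T} \<Longrightarrow> norm (z s) \<le> E * norm \<eta>"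
      using exists_perturbation[of \<eta>] E\<eta> \<delta> unfolding E_def by auto
    have "norm (f (x0 s + z s) - f (x0 s) - J (x0 s) *v z s) \<le> e' * (E * norm \<eta>)"
      if s: "s \<in> {0..T}" for s
    proof -
      have "norm (z s) \<le> \<delta>" using z_bound[OF s] E\<eta> by linarith
      then have "norm (f (x0 s + z s) - f (x0 s) - J (x0 s) *v z s) \<le> e' * norm (z s)"
        by (rule rem[OF s])
      also have "\<dots> \<le> e' * (E * norm \<eta>)" using e' z_bound[OF s] by (intro mult_left_mono) auto
      finally show ?thesis .
    qed
    from perturbation_linearisation_error[OF Y z0 z this]
    have "norm (z T - Y T *v \<eta>) \<le> E * (e' * (E * norm \<eta>) / M)" unfolding E_def .
    also have "\<dots> = e * norm \<eta>"
      using M_pos E by (simp add: e'_def field_simps power2_eq_square)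
    finally show "norm (Omega f T 0 (x0 0 + \<eta>) - x0 T - Y T *v \<eta>) \<le> e * norm \<eta>"
      using Omega_perturbation[OF z0 z] by simp
  qed
qed

lemma Omega_has_derivative:
  assumes Y: "fundamental_matrix J x0 Y"
  shows "((\<lambda>\<eta>. Omega f T 0 (x0 0 + \<eta>)) has_derivative (*v) (Y T)) (at 0)"
  unfolding has_derivative_at_alt
proof (intro conjI allI impI)
  show "bounded_linear ((*v) (Y T))" by simp
  fix e :: real assume "e > 0"
  then obtain d where "d > 0"
    "\<And>\<eta>. norm \<eta> < d \<Longrightarrow> norm (Omega f T 0 (x0 0 + \<eta>) - x0 T - Y T *v \<eta>) \<le> e * norm \<eta>"
    by (rule Omega_linearisation_estimate[OF Y]) blast
  then show "\<exists>d>0. \<forall>\<eta>. norm (\<eta> - 0) < d \<longrightarrow>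
      norm (Omega f T 0 (x0 0 + \<eta>) - Omega f T 0 (x0 0 + 0) - Y T *v (\<eta> - 0)) \<le> e * norm (\<eta> - 0)"
    using Omega_x0 by auto
qed

lemma has_vector_derivative_velocity:
  "((\<lambda>s. f (x0 s)) has_vector_derivative J (x0 t) *v f (x0 t)) (at t)"
  using diff_chain_at[OF x0_solution[of t, unfolded has_vector_derivative_def] has_derivative_f]
  unfolding has_vector_derivative_def by (simp add: o_def matrix_vector_mult_scaleR)

text \<open>The velocity \<open>x0'\<close> solves the variational equation, so \<open>Y t (x0' 0) = x0' t\<close>.\<close>
lemma fundamental_matrix_velocity:
  assumes Y: "fundamental_matrix J x0 Y" and "t \<in> {0..T}"
  shows "Y t *v f (x0 0) = f (x0 t)"
proof -
  define \<phi> where "\<phi> s = Y s *v f (x0 0) - f (x0 s)" for s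
  have "\<phi> t = 0"
  proof (rule gronwall_zero[OF M_pos _ _ _ assms(2)])
    fix s assume s: "s \<in> {0..T}"
    show "(\<phi> has_vector_derivative J (x0 s) *v \<phi> s) (at s within {0..T})"
      unfolding \<phi>_def
      using has_vector_derivative_diff[OF fundamental_matrix_apply_has_vector_derivative[OF Y]
          has_vector_derivative_velocity]
      by (simp add: matrix_vector_mult_diff_distrib has_vector_derivative_at_within)
    show "norm (J (x0 s) *v \<phi> s) \<le> M * norm (\<phi> s)" by (rule norm_J_x0_le[OF s])
  qed (use Y in \<open>simp add: \<phi>_def fundamental_matrix_def\<close>)
  then show ?thesis by (simp add: \<phi>_def)
qed

text \<open>Injectivity of \<open>Y T\<close>: run the variational equation backwards from \<open>T\<close>.\<close>
lemma fundamental_matrix_injective: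
  assumes Y: "fundamental_matrix J x0 Y" and q: "Y T *v q = 0"
  shows "q = 0"
proof -
  define \<phi> where "\<phi> s = Y (T - s) *v q" for s
  have "\<phi> T = 0"
  proof (rule gronwall_zero[OF M_pos])
    fix s assume s: "s \<in> {0..T}"
    have "((\<lambda>u. Y u *v q) \<circ> (\<lambda>s. T - s) has_vector_derivative
        (-1) *\<^sub>R (J (x0 (T - s)) *v (Y (T - s) *v q))) (at s)"
    proof (rule vector_diff_chain_at)
      show "((\<lambda>s. T - s) has_vector_derivative - 1) (at s)"
        by (auto intro!: derivative_eq_intros)
    qed (rule fundamental_matrix_apply_has_vector_derivative[OF Y])
    then show "(\<phi> has_vector_derivative - (J (x0 (T - s)) *v \<phi> s)) (at s within {0..T})"
      unfolding \<phi>_def by (simp add: o_def has_vector_derivative_at_within)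
    show "norm (- (J (x0 (T - s)) *v \<phi> s)) \<le> M * norm (\<phi> s)"
      using norm_J_x0_le[of "T - s"] s by simp
  qed (use q T_pos in \<open>simp_all add: \<phi>_def\<close>)
  then show ?thesis using Y by (simp add: \<phi>_def fundamental_matrix_def)
qed

end

lemma col_append_not_in_range:
  fixes b :: "real^('m::finite) option" and A :: "real^'m^'m option"
  assumes "det (col_append b A) \<noteq> 0"
  shows "b \<notin> range ((*v) A)"
proof
  assume "b \<in> range ((*v) A)"
  then obtain v where Av: "A *v v = b" by auto
  define x :: "real^'m option" where "x = (\<chi> i. case i of None \<Rightarrow> -1 | Some k \<Rightarrow> v $ k)"
  have "col_append b A *v x = 0"
  proof -
    have "(col_append b A *v x) $ i = - b $ i + (A *v v) $ i" for i
    proof -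
      have "(col_append b A *v x) $ i = (\<Sum>j\<in>insert None (range Some). col_append b A $ i $ j * x $ j)"
        by (simp add: matrix_vector_mult_def UNIV_option_conv[symmetric])
      also have "\<dots> = - b $ i + (\<Sum>j\<in>range Some. col_append b A $ i $ j * x $ j)"
        by (subst sum.insert) (auto simp: col_append_def x_def)
      also have "(\<Sum>j\<in>range Some. col_append b A $ i $ j * x $ j) = (A *v v) $ i"
        by (subst sum.reindex) (auto simp: col_append_def x_def matrix_vector_mult_def)
      finally show ?thesis .
    qed
    then show ?thesis using Av by (simp add: vec_eq_iff)
  qed
  moreover have "inj ((*v) (col_append b A))"
    using assms by (intro inj_matrix_vector_mult) (simp add: invertible_det_nz)
  ultimately have "x = 0" by (metis injD matrix_vector_mult_0_right)
  then have "x $ None = 0" by simp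
  then show False by (simp add: x_def)
qed

theorem lemma1:
  fixes f :: "real^('m::finite) option \<Rightarrow> real^'m option"
    and J :: "real^'m option \<Rightarrow> real^'m option^'m option"
    and x0 :: "real \<Rightarrow> real^'m option"
    and T :: real
    and A :: "real^'m^'m option"
  assumes C1: "\<forall>x. (f has_derivative (\<lambda>h. J x *v h)) (at x)" "continuous_on UNIV J"
    and T_pos: "T > 0"
    and sol: "\<forall>t. (x0 has_vector_derivative f (x0 t)) (at t)"
    and periodic: "\<forall>t. x0 (t + T) = x0 t"
    and nonconst: "\<exists>t. x0 t \<noteq> x0 0"
    and nondeg: "nondegenerate J x0 T"
    and nonsing: "det (col_append (vector_derivative x0 (at 0)) A) \<noteq> 0"
  defines "S \<equiv> (\<lambda>v. Omega f T 0 (x0 0 + A *v v))"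
  shows "S differentiable (at 0) \<and>
         vector_derivative x0 (at 0) \<notin> range (frechet_derivative S (at 0))"
proof -
  interpret C1_field_solution f J x0 T
    using C1 T_pos sol by unfold_locales auto
  obtain Y where Y: "fundamental_matrix J x0 Y"
    using nondeg unfolding nondegenerate_def by blast
  have "((\<lambda>\<eta>. Omega f T 0 (x0 0 + \<eta>)) has_derivative (*v) (Y T)) (at (A *v 0))"
    using Omega_has_derivative[OF Y] by simp
  from diff_chain_at[OF bounded_linear.has_derivative[OF matrix_vector_mul_bounded_linear
      has_derivative_ident] this]
  have S': "(S has_derivative (\<lambda>v. Y T *v (A *v v))) (at 0)"
    by (simp add: S_def o_def)
  have velocity: "vector_derivative x0 (at 0) = f (x0 0)"
    using sol vector_derivative_at by blast
  have "f (x0 0) \<notin> range (\<lambda>v. Y T *v (A *v v))"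
  proof
    assume "f (x0 0) \<in> range (\<lambda>v. Y T *v (A *v v))"
    then obtain v where "Y T *v (A *v v) = f (x0 0)" by auto
    moreover have "Y T *v f (x0 0) = f (x0 0)"
      using fundamental_matrix_velocity[OF Y, of T] periodic[rule_format, of 0] T_pos by simp
    ultimately have "A *v v = f (x0 0)"
      using fundamental_matrix_injective[OF Y, of "A *v v - f (x0 0)"]
      by (simp add: matrix_vector_mult_diff_distrib)
    then show False using col_append_not_in_range[OF nonsing] velocity by (metis rangeI)
  qed
  then show ?thesis
    using differentiableI[OF S'] frechet_derivative_at[OF S', symmetric] velocity by simp
qed

end
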